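(* Let $\delta>0$. Let $(x^\star,u^\star)\in\mathbb{R}^n\times\mathbb{R}^m$ satisfy $f(x^\star)+g(x^\star)u^\star=0$, and write $g^\star:=g(x^\star)$. Then: (a) $x^\star$ is an equilibrium of the midpoint-discretized model with input $u^\star$, i.e. the constant sequences $x_k\equiv x^\star$, $u_k\equiv u^\star$ satisfy $x_{k+1}=x_k+\delta f(z_k)+\delta g(z_k)u_k$ with $z_k=\tfrac12(x_{k+1}+x_k)$. (b) For any sequences $(x_k)_{k\in\mathbb{N}}\subset\mathbb{R}^n$, $(u_k)_{k\in\mathbb{N}}\subset\mathbb{R}^m$ satisfying $$x_{k+1}=x_k+\delta f(z_k)+\delta g(z_k)u_k,\qquad z_k:=\tfrac12(x_{k+1}+x_k),$$ define the output $y_k:=(g^\star)^\top Q z_k$, the equilibrium output $y^\star:=(g^\star)^\top Q x^\star$, and the errors $\tilde x_k:=x_k-x^\star$, $\tilde z_k:=z_k-x^\star$, $\tilde u_k:=u_k-u^\star$, $\tilde y_k:=y_k-y^\star$. Then for every $k\in\mathbb{N}$, $$\frac{1}{\delta}\big(H(\tilde x_{k+1})-H(\tilde x_k)\big)=-\tilde z_k^\top QRQ\,\tilde z_k+\tilde y_k^\top\tilde u_k\le \tilde y_k^\top\tilde u_k,$$ i.e. the map $\tilde u_k\mapsto\tilde y_k$ is passive with storage function $H(\tilde x_k)$ (shifted passivity).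
   Context: Power converter model: fix integers $n,m\ge1$, a symmetric positive definite matrix $Q\in\mathbb{R}^{n\times n}$, skew-symmetric matrices $J_0,J_1,\dots,J_m\in\mathbb{R}^{n\times n}$ ($J_i^\top=-J_i$), a symmetric positive semidefinite matrix $R\in\mathbb{R}^{n\times n}$, matrices $G_0,G_1,\dots,G_m\in\mathbb{R}^{n\times n}$, and a constant vector $E\in\mathbb{R}^n$. Define $H(x):=\tfrac12 x^\top Qx$, $f(x):=(J_0-R)Qx+G_0E\in\mathbb{R}^n$, and $g(x)\in\mathbb{R}^{n\times m}$ as the matrix whose $i$-th column is $J_iQx+G_iE$, $i=1,\dots,m$. The continuous-time model is $\dot x=f(x)+g(x)u$; its midpoint (implicit midpoint rule) discretization with sampling time $\delta>0$ is $x_{k+1}=x_k+\delta f(z_k)+\delta g(z_k)u_k$ with $z_k=\tfrac12(x_{k+1}+x_k)$. *)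

theory Defs
  imports "HOL-Analysis.Analysis"
begin

definition sym_mat :: "real^'n^'n \<Rightarrow> bool" where
  "sym_mat A \<longleftrightarrow> transpose A = A"

definition skew_mat :: "real^'n^'n \<Rightarrow> bool" where
  "skew_mat A \<longleftrightarrow> transpose A = - A"

definition pos_def_mat :: "real^'n^'n \<Rightarrow> bool" where
  "pos_def_mat A \<longleftrightarrow> sym_mat A \<and> (\<forall>x. x \<noteq> 0 \<longrightarrow> x \<bullet> (A *v x) > 0)"

definition pos_semidef_mat :: "real^'n^'n \<Rightarrow> bool" where
  "pos_semidef_mat A \<longleftrightarrow> sym_mat A \<and> (\<forall>x. x \<bullet> (A *v x) \<ge> 0)"

definition ham :: "real^'n^'n \<Rightarrow> real^'n \<Rightarrow> real" where
  "ham Q x = (1/2) * (x \<bullet> (Q *v x))"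

definition drift :: "real^'n^'n \<Rightarrow> real^'n^'n \<Rightarrow> real^'n^'n \<Rightarrow> real^'n^'n \<Rightarrow> real^'n
   \<Rightarrow> real^'n \<Rightarrow> real^'n" where
  "drift Q J0 R G0 E x = (J0 - R) *v (Q *v x) + G0 *v E"

definition inmat :: "real^'n^'n \<Rightarrow> ('m \<Rightarrow> real^'n^'n) \<Rightarrow> ('m \<Rightarrow> real^'n^'n) \<Rightarrow> real^'n
   \<Rightarrow> real^'n \<Rightarrow> real^'m^'n" where
  "inmat Q J G E x = (\<chi> r c. (J c *v (Q *v x) + G c *v E) $ r)"

end

theory Submission
  imports Defs
begin

(* The implicit midpoint rule is an exact discrete gradient for the quadratic Hamiltonian:
   H b - H a = (b - a)^T Q (a + b)/2.  Subtracting the equilibrium relation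
   f xs + g xs us = 0 from one step of the scheme, the increment of H along the error is
   therefore the inner product of Q (z_k - xs) with the error dynamics.  The skew matrices
   J_0 and J_i contribute nothing (the input columns of g z_k - g xs are J_i Q (z_k - xs)),
   the resistive part yields the dissipation term, and what is left is the output error
   paired with the input error. *)

lemma sym_mat_inner_commute:
  fixes A :: "real^'n^'n"
  assumes "sym_mat A"
  shows "x \<bullet> (A *v y) = (A *v x) \<bullet> y"
  using assms unfolding sym_mat_def by (metis dot_lmul_matrix transpose_matrix_vector)

lemma skew_mat_quadratic_form_eq_0:
  fixes A :: "real^'n^'n"
  assumes "skew_mat A"
  shows "x \<bullet> (A *v x) = 0"
proof -
  have "x \<bullet> (A *v x) = (transpose A *v x) \<bullet> x"
    by (metis dot_lmul_matrix transpose_matrix_vector)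
  also have "\<dots> = - (x \<bullet> (A *v x))"
    using assms unfolding skew_mat_def
    by (metis diff_0 inner_commute inner_minus_left matrix_vector_mult_0 matrix_vector_mult_diff_rdistrib)
  finally show ?thesis by simp
qed

lemma sym_mat_congruence_quadratic_form:
  fixes Q R :: "real^'n^'n"
  assumes "sym_mat Q"
  shows "x \<bullet> ((Q ** R ** Q) *v x) = (Q *v x) \<bullet> (R *v (Q *v x))"
proof -
  have "(Q ** R ** Q) *v x = Q *v (R *v (Q *v x))"
    by (simp add: matrix_vector_mul_assoc matrix_mul_assoc)
  then show ?thesis
    using sym_mat_inner_commute[OF assms] by simp
qed

lemma ham_diff_midpoint:
  assumes "sym_mat Q"
  shows "ham Q p - ham Q q = (p - q) \<bullet> (Q *v ((1/2) *\<^sub>R (p + q)))"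
  using sym_mat_inner_commute[OF assms, of p q]
  by (simp add: ham_def matrix_vector_mult_scaleR matrix_vector_right_distrib
      inner_diff_left inner_add_right inner_commute algebra_simps)

lemma drift_diff:
  "drift Q J0 R G0 E z - drift Q J0 R G0 E x = (J0 - R) *v (Q *v (z - x))"
  by (simp add: drift_def matrix_vector_mult_diff_distrib)

lemma inmat_mult_vec:
  "inmat Q J G E x *v v = (\<Sum>c\<in>UNIV. v $ c *\<^sub>R (J c *v (Q *v x) + G c *v E))"
  by (simp add: inmat_def matrix_vector_mult_def vec_eq_iff sum_component mult.commute)

lemma inner_inmat_diff_eq_0:
  assumes "\<And>c. skew_mat (J c)"
  shows "(Q *v (z - x)) \<bullet> (inmat Q J G E z *v v - inmat Q J G E x *v v) = 0"
proof -
  have "inmat Q J G E z *v v - inmat Q J G E x *v v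
      = (\<Sum>c\<in>UNIV. v $ c *\<^sub>R (J c *v (Q *v (z - x))))"
    by (simp add: inmat_mult_vec sum_subtractf[symmetric] matrix_vector_mult_diff_distrib
        algebra_simps)
  then show ?thesis
    by (simp add: inner_sum_right skew_mat_quadratic_form_eq_0[OF assms])
qed

lemma pos_semidef_mat_congruence:
  fixes Q R :: "real^'n^'n"
  assumes Q: "sym_mat Q" and R: "pos_semidef_mat R"
  shows "pos_semidef_mat (Q ** R ** Q)"
proof -
  have "transpose (Q ** R ** Q) = Q ** R ** Q"
    using Q R by (simp add: sym_mat_def pos_semidef_mat_def matrix_transpose_mul matrix_mul_assoc)
  then show ?thesis
    using R by (simp add: pos_semidef_mat_def sym_mat_def sym_mat_congruence_quadratic_form[OF Q])
qed

lemma midpoint_step_energy_balance: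
  fixes Q R J0 G0 :: "real^'n^'n"
    and J G :: "'m::finite \<Rightarrow> real^'n^'n"
    and E xs a b z :: "real^'n"
    and us v :: "real^'m"
  assumes Q: "sym_mat Q" and J0: "skew_mat J0" and J: "\<And>i. skew_mat (J i)"
    and \<delta>: "\<delta> \<noteq> 0"
    and eq: "drift Q J0 R G0 E xs + inmat Q J G E xs *v us = 0"
    and step: "b = a + \<delta> *\<^sub>R drift Q J0 R G0 E z + \<delta> *\<^sub>R (inmat Q J G E z *v v)"
    and z: "z = (1/2) *\<^sub>R (b + a)"
  shows "(1/\<delta>) * (ham Q (b - xs) - ham Q (a - xs))
     = - ((z - xs) \<bullet> ((Q ** R ** Q) *v (z - xs)))
       + (transpose (inmat Q J G E xs) *v (Q *v z) - transpose (inmat Q J G E xs) *v (Q *v xs))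
         \<bullet> (v - us)"
proof -
  define w where "w = Q *v (z - xs)"
  let ?g = "inmat Q J G E"
  have "(1/2) *\<^sub>R ((b - xs) + (a - xs)) = z - xs"
    by (simp add: z algebra_simps flip: scaleR_2)
  then have "ham Q (b - xs) - ham Q (a - xs) = (b - a) \<bullet> w"
    using ham_diff_midpoint[OF Q, of "b - xs" "a - xs"] by (simp add: w_def)
  also have "b - a = \<delta> *\<^sub>R ((drift Q J0 R G0 E z - drift Q J0 R G0 E xs)
      + (?g z *v v - ?g xs *v v) + ?g xs *v (v - us))"
    using step eq by (simp add: matrix_vector_mult_diff_distrib algebra_simps)
  finally have "(1/\<delta>) * (ham Q (b - xs) - ham Q (a - xs))
      = w \<bullet> ((J0 - R) *v w) + w \<bullet> (?g z *v v - ?g xs *v v) + w \<bullet> (?g xs *v (v - us))"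
    using \<delta> by (simp add: drift_diff w_def inner_commute inner_add_right)
  also have "w \<bullet> ((J0 - R) *v w) = - (w \<bullet> (R *v w))"
    using skew_mat_quadratic_form_eq_0[OF J0, of w]
    by (simp add: matrix_vector_mult_diff_rdistrib inner_diff_right)
  also have "w \<bullet> (?g z *v v - ?g xs *v v) = 0"
    unfolding w_def by (rule inner_inmat_diff_eq_0[OF J])
  also have "w \<bullet> (?g xs *v (v - us)) = (transpose (?g xs) *v w) \<bullet> (v - us)"
    by (simp add: dot_lmul_matrix)
  finally have "(1/\<delta>) * (ham Q (b - xs) - ham Q (a - xs))
      = - (w \<bullet> (R *v w)) + (transpose (?g xs) *v w) \<bullet> (v - us)"
    by simp
  moreover have "transpose (?g xs) *v (Q *v z) - transpose (?g xs) *v (Q *v xs)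
      = transpose (?g xs) *v w"
    by (simp add: w_def matrix_vector_mult_diff_distrib)
  ultimately show ?thesis
    by (simp add: w_def sym_mat_congruence_quadratic_form[OF Q])
qed

theorem proposition2:
  fixes Q R J0 G0 :: "real^'n^'n"
    and J G :: "'m::finite \<Rightarrow> real^'n^'n"
    and E xs :: "real^'n"
    and us :: "real^'m"
    and \<delta> :: real
  assumes Q: "pos_def_mat Q"
    and J0: "skew_mat J0"
    and J: "\<And>i. skew_mat (J i)"
    and R: "pos_semidef_mat R"
    and \<delta>: "\<delta> > 0"
    and eq: "drift Q J0 R G0 E xs + inmat Q J G E xs *v us = 0"
  shows
    "(let z = (1/2) *\<^sub>R (xs + xs) in
        xs = xs + \<delta> *\<^sub>R drift Q J0 R G0 E z + \<delta> *\<^sub>R (inmat Q J G E z *v us))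
     \<and> (\<forall>(x :: nat \<Rightarrow> real^'n) (u :: nat \<Rightarrow> real^'m).
          (\<forall>k. x (Suc k) = x k
                 + \<delta> *\<^sub>R drift Q J0 R G0 E ((1/2) *\<^sub>R (x (Suc k) + x k))
                 + \<delta> *\<^sub>R (inmat Q J G E ((1/2) *\<^sub>R (x (Suc k) + x k)) *v u k))
          \<longrightarrow> (\<forall>k. let gs = inmat Q J G E xs;
                     z = (1/2) *\<^sub>R (x (Suc k) + x k);
                     y = transpose gs *v (Q *v z);
                     ys = transpose gs *v (Q *v xs);
                     xt = x k - xs; xt' = x (Suc k) - xs;
                     zt = z - xs; ut = u k - us; yt = y - ys
                 in (1/\<delta>) * (ham Q xt' - ham Q xt)
                      = - (zt \<bullet> ((Q ** R ** Q) *v zt)) + yt \<bullet> ut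
                    \<and> - (zt \<bullet> ((Q ** R ** Q) *v zt)) + yt \<bullet> ut \<le> yt \<bullet> ut))"
proof -
  have symQ: "sym_mat Q"
    using Q by (simp add: pos_def_mat_def)
  have dissipation: "\<And>x. x \<bullet> ((Q ** R ** Q) *v x) \<ge> 0"
    using pos_semidef_mat_congruence[OF symQ R] by (simp add: pos_semidef_mat_def)
  have midpoint_xs: "(1/2) *\<^sub>R (xs + xs) = xs"
    by (simp flip: scaleR_2)
  show ?thesis
    unfolding Let_def
  proof (intro conjI allI impI, goal_cases)
    case 1
    show ?case
      using eq by (simp add: midpoint_xs add.assoc flip: scaleR_add_right)
  next
    case (2 x u k)
    show ?case
      by (rule midpoint_step_energy_balance[OF symQ J0 J _ eq "2"[rule_format] refl]) (use \<delta> in simp)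
  next
    case 3
    show ?case
      using dissipation by simp
  qed
qed

end
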